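(* Let $(X,M)$ be an intrinsic Möbius space and let $d$ be a (possibly extended) quasi-metric on $X$ that induces $M$. Let $d'$ be either a rescaling $d'=\lambda d$ ($\lambda>0$) of $d$ or the involution $d'=d_o$ of $d$ at a point $o\in X$ which is not the point at infinity of $d$. Then $\dim_{Haus}(X,d)=\dim_{Haus}(X,d')$. In particular, setting $\dim_{Haus}(X,M):=\dim_{Haus}(X,d)$ for any quasi-metric $d$ inducing $M$ gives a well-defined quantity, and if $f:(X,M)\to(X',M')$ is a Möbius equivalence between intrinsic Möbius spaces, then $\dim_{Haus}(X,M)=\dim_{Haus}(X',M')$.
   Context: Let $X$ be a set with at least three points. A semi-metric is a symmetric map $d:X\times X\to[0,\infty)$ with $d(x,y)=0\iff x=y$. An extended semi-metric is a map $d:X\times X\to[0,\infty]$, symmetric with $d(x,y)=0\iff x=y$, for which there is exactly one point $\infty\in X$ (the point at infinity) with $d(x,\infty)=\infty$ for $x\neq\infty$ and $d(x,y)<\infty$ for $x,y\neq\infty$. For $K\ge1$, a (possibly extended) $K$-quasi-metric is a (possibly extended) semi-metric with $d(x,y)\le K\max(d(x,z),d(z,y))$ for all $x,y,z$; a quasi-metric is a $K$-quasi-metric for some $K$. Admissible quadruples $\mathcal A_4$: quadruples in $X^4$ in which no point appears more than twice; non-degenerate means all entries distinct. Let $\overline\Delta=\{(a:b:c)\in\mathbb RP^2: a,b,c>0\}\cup\{(1:1:0),(1:0:1),(0:1:1)\}$. The cross-ratio triple of $d$ is $crt_d(wxyz)=(d(w,x)d(y,z):d(w,y)d(z,x):d(w,z)d(x,y))$,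 where infinite distances cancel: $crt_d(\infty xyz)=(d(y,z):d(z,x):d(x,y))$, $crt_d(\infty\infty yz)=(0:1:1)$, and analogously for permutations. Let $L_4=\{(x,y,z)\in\mathbb R^3:x+y+z=0\}$, $\overline{L_4}=L_4\cup\{(0,\infty,-\infty),(-\infty,0,\infty),(\infty,-\infty,0)\}$, and $\overline\Phi:\overline\Delta\to\overline{L_4}$, $(a:b:c)\mapsto(\ln(b/c),\ln(c/a),\ln(a/b))$, extended by $(1:1:0)\mapsto(\infty,-\infty,0)$, $(1:0:1)\mapsto(-\infty,0,\infty)$, $(0:1:1)\mapsto(0,\infty,-\infty)$. Let $\varphi:\mathcal S_4\to\mathcal S_3$ be the homomorphism given by the induced permutation of the triple $((12)(34),(13)(42),(14)(23))$; $\mathcal S_3$ acts on $\overline{L_4}$ by permuting coordinates. A generalized Möbius structure is a map $M:\mathcal A_4\to\overline{L_4}$ such that: (1) $M(\pi P)=\mathrm{sgn}(\pi)\varphi(\pi)M(P)$ for all $P\in\mathcal A_4$, $\pi\in\mathcal S_4$; (2) $M(P)\in L_4$ iff $P$ is non-degenerate; (3) $M(xxyz)=(0,\infty,-\infty)$; (4) for every admissible 5-tuple $(x,y,\omega,\alpha,\beta)$ with $(\omega,\alpha,\beta)$ non-degenerate, $\alpha\ne x\ne\beta$, $\alpha\ne y\ne\beta$, there is $\lambda\in\mathbb R\cup\{\pm\infty\}$ with $M(\alpha x\omega\beta)+M(\alpha\omega y\beta)-M(\alpha xy\beta)=(\lambda,-\lambda,0)$; moreover the first component of the left side is well defined when $x\neq\beta$,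 $y\ne\alpha$, and the second when $x\ne\alpha$, $y\ne\beta$. Write $crt=\overline\Phi^{-1}\circ M$. A semi-metric $d$ induces $M$ if $crt=crt_d$. $M$ is intrinsic (and $(X,M)$ an intrinsic Möbius space) if moreover the closure of the image of $crt$ in $\mathbb RP^2$ contains none of $(1:0:0),(0:1:0),(0:0:1)$. A Möbius equivalence $f:(X,M)\to(X',M')$ is a bijection with $M'(f(w)f(x)f(y)f(z))=M(wxyz)$ for all admissible quadruples. Involution: for a (possibly extended) quasi-metric $d$ and $o\in X$ other than the point at infinity, $d_o(x,x)=0$, $d_o(x,y)=\frac{d(x,y)}{d(x,o)d(o,y)}$ for distinct $x,y\ne\infty$, $d_o(\infty,y)=1/d(o,y)$ and $d_o(x,\infty)=1/d(x,o)$ for the respective distinct points, with the convention $\lambda/0=\infty$ for $\lambda>0$. Hausdorff dimension of a (possibly extended) quasi-metric space $(X,d)$: $B_r(x)=\{y:d(x,y)\le r\}$; a $\delta$-cover of a set is a cover by closed balls $B_{r_i}(x_i)$ with $r_i\le\delta$. For $A\subseteq X$, $s\ge0$: $\mu^s_{\delta,d}(A)=\inf\{\sum_i r_i^s:\{B_{r_i}(x_i)\}\text{ a }\delta\text{-cover of }A\setminus\{\infty\}\}$, $\mu^s_d(A)=\lim_{\delta\to0}\mu^s_{\delta,d}(A)$, and $\dim_{Haus}(X,d)=\inf\{s\in\mathbb R:\mu^s_d(X)=0\}$. *)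

theory Defs
  imports "HOL-Analysis.Analysis" "HOL-Combinatorics.Permutations"
begin

type_synonym 'a quad = "'a \<times> 'a \<times> 'a \<times> 'a"
type_synonym triple = "ereal \<times> ereal \<times> ereal"

definition qlist :: "'a quad \<Rightarrow> 'a list" where
  "qlist P = (case P of (w,x,y,z) \<Rightarrow> [w,x,y,z])"

definition admissible :: "'a quad \<Rightarrow> bool" where
  "admissible P \<longleftrightarrow> (\<forall>p. count_list (qlist P) p \<le> 2)"

definition nondegenerate :: "'a quad \<Rightarrow> bool" where
  "nondegenerate P \<longleftrightarrow> distinct (qlist P)"

definition permq :: "(nat \<Rightarrow> nat) \<Rightarrow> 'a quad \<Rightarrow> 'a quad" where
  "permq \<pi> P = (qlist P ! \<pi> 0, qlist P ! \<pi> 1, qlist P ! \<pi> 2, qlist P ! \<pi> 3)"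

text \<open>The three pairings (12)(34), (13)(42), (14)(23), with positions numbered 0..3.\<close>
definition pairing :: "nat \<Rightarrow> nat set set" where
  "pairing k = (if k = 1 then {{0,1},{2,3}} else if k = 2 then {{0,2},{3,1}} else {{0,3},{1,2}})"

definition phi_perm :: "(nat \<Rightarrow> nat) \<Rightarrow> nat \<Rightarrow> nat" where
  "phi_perm \<pi> k = (THE j. j \<in> {1,2,3} \<and> (\<lambda>e. \<pi> ` e) ` pairing k = pairing j)"

definition comp :: "nat \<Rightarrow> 'b \<times> 'b \<times> 'b \<Rightarrow> 'b" where
  "comp k t = (case t of (a,b,c) \<Rightarrow> if k = 1 then a else if k = 2 then b else c)"

definition L4 :: "triple set" where
  "L4 = {(ereal u, ereal v, ereal w) | u v w. u + v + w = 0}"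

definition L4bar :: "triple set" where
  "L4bar = L4 \<union> {(0, \<infinity>, -\<infinity>), (-\<infinity>, 0, \<infinity>), (\<infinity>, -\<infinity>, 0)}"

text \<open>The map Phi-bar from (representatives of) points of Delta-bar to L4bar.\<close>
definition Phibar :: "real \<times> real \<times> real \<Rightarrow> triple" where
  "Phibar t = (case t of (a,b,c) \<Rightarrow>
     if a > 0 \<and> b > 0 \<and> c > 0 then (ereal (ln (b/c)), ereal (ln (c/a)), ereal (ln (a/b)))
     else if c = 0 then (\<infinity>, -\<infinity>, 0)
     else if b = 0 then (-\<infinity>, 0, \<infinity>)
     else (0, \<infinity>, -\<infinity>))"

text \<open>Inverse of Phi-bar, with values the representative in Delta-bar normalised by a+b+c=1.\<close>
definition Phibar_inv :: "triple \<Rightarrow> real \<times> real \<times> real" where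
  "Phibar_inv t = (case t of (u,v,w) \<Rightarrow>
     if t \<in> L4 then
       (let a = 1; b = exp (- real_of_ereal w); c = exp (real_of_ereal v); s = a + b + c
        in (a/s, b/s, c/s))
     else if t = (\<infinity>, -\<infinity>, 0) then (1/2, 1/2, 0)
     else if t = (-\<infinity>, 0, \<infinity>) then (1/2, 0, 1/2)
     else (0, 1/2, 1/2))"

definition wd3 :: "ereal \<Rightarrow> ereal \<Rightarrow> ereal \<Rightarrow> bool" where
  "wd3 a b c \<longleftrightarrow> \<not> (\<infinity> \<in> {a, b, -c} \<and> -\<infinity> \<in> {a, b, -c})"

definition moebius_axiom4 :: "('a quad \<Rightarrow> triple) \<Rightarrow> bool" where
  "moebius_axiom4 M \<longleftrightarrow>
    (\<forall>x y \<omega> \<alpha> \<beta>. (\<forall>p. count_list [x, y, \<omega>, \<alpha>, \<beta>] p \<le> 2) \<and> distinct [\<omega>, \<alpha>, \<beta>]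
        \<and> \<alpha> \<noteq> x \<and> x \<noteq> \<beta> \<and> \<alpha> \<noteq> y \<and> y \<noteq> \<beta> \<longrightarrow>
      (let t1 = M (\<alpha>, x, \<omega>, \<beta>); t2 = M (\<alpha>, \<omega>, y, \<beta>); t3 = M (\<alpha>, x, y, \<beta>);
           W = (\<lambda>k. wd3 (comp k t1) (comp k t2) (comp k t3));
           S = (\<lambda>k. comp k t1 + comp k t2 + - comp k t3)
       in (x \<noteq> \<beta> \<and> y \<noteq> \<alpha> \<longrightarrow> W 1) \<and> (x \<noteq> \<alpha> \<and> y \<noteq> \<beta> \<longrightarrow> W 2) \<and>
          (\<exists>l::ereal. (W 1 \<longrightarrow> S 1 = l) \<and> (W 2 \<longrightarrow> S 2 = - l) \<and> (W 3 \<longrightarrow> S 3 = 0))))"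

definition gen_moebius :: "('a quad \<Rightarrow> triple) \<Rightarrow> bool" where
  "gen_moebius M \<longleftrightarrow>
     (\<forall>P. admissible P \<longrightarrow> M P \<in> L4bar) \<and>
     (\<forall>P \<pi> k. admissible P \<and> \<pi> permutes {0..3::nat} \<and> k \<in> {1,2,3} \<longrightarrow>
        comp k (M (permq \<pi> P)) = ereal (real_of_int (sign \<pi>)) * comp (phi_perm \<pi> k) (M P)) \<and>
     (\<forall>P. admissible P \<longrightarrow> (M P \<in> L4 \<longleftrightarrow> nondegenerate P)) \<and>
     (\<forall>x y z. admissible (x, x, y, z) \<longrightarrow> M (x, x, y, z) = (0, \<infinity>, -\<infinity>)) \<and>
     moebius_axiom4 M"

text \<open>crt = Phibar^-1 o M, as normalised representatives; closure taken in the simplex chart.\<close>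
definition intrinsic :: "('a quad \<Rightarrow> triple) \<Rightarrow> bool" where
  "intrinsic M \<longleftrightarrow>
     (let R = Phibar_inv ` (M ` {P. admissible P})
      in (1,0,0) \<notin> closure R \<and> (0,1,0) \<notin> closure R \<and> (0,0,1) \<notin> closure R)"

definition moebius_space :: "('a quad \<Rightarrow> triple) \<Rightarrow> bool" where
  "moebius_space M \<longleftrightarrow> gen_moebius M \<and> intrinsic M"

definition map_quad :: "('a \<Rightarrow> 'b) \<Rightarrow> 'a quad \<Rightarrow> 'b quad" where
  "map_quad f P = (case P of (w,x,y,z) \<Rightarrow> (f w, f x, f y, f z))"

definition moebius_equiv :: "('a \<Rightarrow> 'b) \<Rightarrow> ('a quad \<Rightarrow> triple) \<Rightarrow> ('b quad \<Rightarrow> triple) \<Rightarrow> bool" where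
  "moebius_equiv f M M' \<longleftrightarrow> bij f \<and> (\<forall>P. admissible P \<longrightarrow> M' (map_quad f P) = M P)"

definition semi_metric :: "('a \<Rightarrow> 'a \<Rightarrow> ennreal) \<Rightarrow> bool" where
  "semi_metric d \<longleftrightarrow> (\<forall>x y. d x y = d y x) \<and> (\<forall>x y. d x y = 0 \<longleftrightarrow> x = y) \<and> (\<forall>x y. d x y \<noteq> \<infinity>)"

definition ext_semi_metric :: "('a \<Rightarrow> 'a \<Rightarrow> ennreal) \<Rightarrow> bool" where
  "ext_semi_metric d \<longleftrightarrow> (\<forall>x y. d x y = d y x) \<and> (\<forall>x y. d x y = 0 \<longleftrightarrow> x = y) \<and>
     (\<exists>!p. (\<forall>x. x \<noteq> p \<longrightarrow> d x p = \<infinity>) \<and> (\<forall>x y. x \<noteq> p \<longrightarrow> y \<noteq> p \<longrightarrow> d x y \<noteq> \<infinity>))"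

definition quasi_metric :: "('a \<Rightarrow> 'a \<Rightarrow> ennreal) \<Rightarrow> bool" where
  "quasi_metric d \<longleftrightarrow> (semi_metric d \<or> ext_semi_metric d) \<and>
     (\<exists>K::real. K \<ge> 1 \<and> (\<forall>x y z. d x y \<le> ennreal K * max (d x z) (d z y)))"

text \<open>The point at infinity (empty set if d is not extended).\<close>
definition infpts :: "('a \<Rightarrow> 'a \<Rightarrow> ennreal) \<Rightarrow> 'a set" where
  "infpts d = {p. \<forall>x. x \<noteq> p \<longrightarrow> d x p = \<infinity>}"

text \<open>Cross-ratio triple (a representative); infinite distances cancel, i.e. are replaced by 1.\<close>
definition Dfin :: "('a \<Rightarrow> 'a \<Rightarrow> ennreal) \<Rightarrow> 'a \<Rightarrow> 'a \<Rightarrow> real" where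
  "Dfin d u v = (if d u v = \<infinity> then 1 else enn2real (d u v))"

definition crt_rep :: "('a \<Rightarrow> 'a \<Rightarrow> ennreal) \<Rightarrow> 'a quad \<Rightarrow> real \<times> real \<times> real" where
  "crt_rep d P = (case P of (w,x,y,z) \<Rightarrow>
     (Dfin d w x * Dfin d y z, Dfin d w y * Dfin d z x, Dfin d w z * Dfin d x y))"

definition induces :: "('a \<Rightarrow> 'a \<Rightarrow> ennreal) \<Rightarrow> ('a quad \<Rightarrow> triple) \<Rightarrow> bool" where
  "induces d M \<longleftrightarrow> (\<forall>P. admissible P \<longrightarrow> M P = Phibar (crt_rep d P))"

text \<open>Involution of d at p0 (ennreal division: lambda / 0 = infinity for lambda > 0).\<close>
definition involution :: "('a \<Rightarrow> 'a \<Rightarrow> ennreal) \<Rightarrow> 'a \<Rightarrow> 'a \<Rightarrow> 'a \<Rightarrow> ennreal" where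
  "involution d p0 x y =
     (if x = y then 0
      else if x \<in> infpts d then 1 / d p0 y
      else if y \<in> infpts d then 1 / d x p0
      else d x y / (d x p0 * d p0 y))"

definition cball_d :: "('a \<Rightarrow> 'a \<Rightarrow> ennreal) \<Rightarrow> 'a \<Rightarrow> real \<Rightarrow> 'a set" where
  "cball_d d x r = {y. d x y \<le> ennreal r}"

definition haus_pre :: "('a \<Rightarrow> 'a \<Rightarrow> ennreal) \<Rightarrow> real \<Rightarrow> real \<Rightarrow> 'a set \<Rightarrow> ennreal" where
  "haus_pre d s \<delta> A =
     (INF C \<in> {(I, c, r). (\<forall>i\<in>I. 0 < r i \<and> r i \<le> \<delta>) \<and>
                         A - infpts d \<subseteq> (\<Union>i\<in>I. cball_d d (c i) (r i))}.
        (case C of (I, c, r) \<Rightarrow> (\<Sum>i. if i \<in> (I::nat set) then ennreal ((r i :: real) powr s) else 0)))"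

definition haus_meas :: "('a \<Rightarrow> 'a \<Rightarrow> ennreal) \<Rightarrow> real \<Rightarrow> 'a set \<Rightarrow> ennreal" where
  "haus_meas d s A = (SUP \<delta> \<in> {0<..}. haus_pre d s \<delta> A)"

definition dimH :: "('a \<Rightarrow> 'a \<Rightarrow> ennreal) \<Rightarrow> ereal" where
  "dimH d = Inf (ereal ` {s. haus_meas d s UNIV = 0})"

end

theory Submission
  imports Defs
begin

text \<open>
  Hausdorff dimension only depends on which sets are null for the \<open>s\<close>-dimensional Hausdorff
  measure.  Null sets pass from \<open>d\<close> to \<open>d'\<close> on a set \<open>A\<close> when small \<open>d\<close>-balls meet \<open>A\<close> in
  sets of proportionally small \<open>d'\<close>-diameter, and they are stable under countable unions; hence
  two quasi-metrics that are comparable in this sense on the pieces of a countable cover (up to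
  countably many points) have the same dimension.  A rescaling is comparable to \<open>d\<close> everywhere,
  the involution \<open>d\<^sub>o\<close> on each dyadic annulus \<open>2\<^sup>k \<le> d(x, o) < 2\<^sup>k\<^sup>+\<^sup>1\<close>.  If \<open>d\<close> and \<open>d'\<close> have
  the same cross-ratios, then \<open>\<rho> = d' / d\<close> satisfies \<open>\<rho>(x, y) \<rho>(a, b) = \<rho>(x, a) \<rho>(y, b)\<close> for
  fixed \<open>a, b\<close>, so \<open>d\<close> and \<open>d'\<close> are comparable where \<open>\<rho>(\<cdot>, a)\<close> and \<open>\<rho>(\<cdot>, b)\<close> lie in
  fixed dyadic ranges.  A Moebius equivalence pulls back a quasi-metric inducing \<open>M'\<close> to one
  inducing \<open>M\<close>.
\<close>

section \<open>Hausdorff null sets\<close>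

definition haus_null :: "('a \<Rightarrow> 'a \<Rightarrow> ennreal) \<Rightarrow> real \<Rightarrow> 'a set \<Rightarrow> bool" where
  "haus_null d s A \<longleftrightarrow> (\<forall>\<delta>>0. \<forall>\<epsilon>>0. \<exists>I c r. (\<forall>i\<in>I. 0 < r i \<and> r i \<le> \<delta>) \<and>
      A \<subseteq> (\<Union>i\<in>I. cball_d d (c i) (r i)) \<and>
      (\<Sum>i. if i \<in> (I::nat set) then ennreal (r i powr s) else 0) < ennreal \<epsilon>)"

lemma ennreal_eq_0_iff_less_all: "(x::ennreal) = 0 \<longleftrightarrow> (\<forall>\<epsilon>>0. x < ennreal \<epsilon>)"
proof
  assume small: "\<forall>\<epsilon>>0. x < ennreal \<epsilon>"
  have "x \<le> 0"
  proof (rule ennreal_le_epsilon)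
    fix e :: real assume "0 < e"
    then show "x \<le> 0 + ennreal e" using small by (simp add: less_imp_le)
  qed
  then show "x = 0" by simp
qed simp

lemma haus_pre_eq_0_iff:
  "haus_pre d s \<delta> A = 0 \<longleftrightarrow> (\<forall>\<epsilon>>0. \<exists>I c r. (\<forall>i\<in>I. 0 < r i \<and> r i \<le> \<delta>) \<and>
      A - infpts d \<subseteq> (\<Union>i\<in>I. cball_d d (c i) (r i)) \<and>
      (\<Sum>i. if i \<in> (I::nat set) then ennreal (r i powr s) else 0) < ennreal \<epsilon>)"
  unfolding haus_pre_def ennreal_eq_0_iff_less_all[of "Inf _"] INF_less_iff
  by (simp add: Bex_def)

lemma haus_meas_eq_0_iff: "haus_meas d s A = 0 \<longleftrightarrow> haus_null d s (A - infpts d)"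
proof -
  have "haus_meas d s A = 0 \<longleftrightarrow> (\<forall>\<delta>>0. haus_pre d s \<delta> A = 0)"
    unfolding haus_meas_def
      by (simp add: SUP_bot_conv(1)[where 'a = ennreal, unfolded bot_ennreal] Ball_def)
  then show ?thesis unfolding haus_pre_eq_0_iff haus_null_def .
qed

lemma dimH_eq_if_same_null_sets:
  assumes "\<And>s. haus_null d s (UNIV - infpts d) \<longleftrightarrow> haus_null d' s (UNIV - infpts d')"
  shows "dimH d = dimH d'"
  unfolding dimH_def haus_meas_eq_0_iff assms ..

lemma haus_null_subset: "A \<subseteq> B \<Longrightarrow> haus_null d s B \<Longrightarrow> haus_null d s A"
  unfolding haus_null_def by (meson order_trans)

lemma haus_null_empty: "haus_null d s {}"
  unfolding haus_null_def by (intro allI impI exI[of _ "{}"]) auto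

lemma not_haus_null_nonpos:
  assumes "s \<le> 0" "A \<noteq> {}" shows "\<not> haus_null d s A"
proof
  assume null: "haus_null d s A"
  obtain I c r where r: "\<forall>i\<in>I. 0 < r i \<and> r i \<le> 1"
    and cov: "A \<subseteq> (\<Union>i\<in>I. cball_d d (c i) (r i))"
    and sum: "(\<Sum>i. if i \<in> (I::nat set) then ennreal (r i powr s) else 0) < ennreal 1"
    using null[unfolded haus_null_def, rule_format, OF zero_less_one zero_less_one] by blast
  obtain x where "x \<in> A" using assms(2) by blast
  then obtain i where i: "i \<in> I" using cov by blast
  have "ennreal (r i powr s) < ennreal 1" using ennreal_suminf_lessD[OF sum, of i] i by simp
  then have "r i powr s < 1" by (simp add: ennreal_less_iff)
  moreover have "r i powr s = (1 / r i) powr (- s)" using r i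
    by (simp add: powr_divide powr_minus_divide)
  moreover have "1 \<le> (1 / r i) powr (- s)" using r i assms(1) by (intro ge_one_powr_ge_zero) simp_all
  ultimately show False by linarith
qed

lemma haus_null_singleton:
  assumes "0 < s" "d p p = 0" shows "haus_null d s {p}"
  unfolding haus_null_def
proof (intro allI impI)
  fix \<delta> \<epsilon> :: real assume "0 < \<delta>" "0 < \<epsilon>"
  define \<rho> where "\<rho> = min \<delta> ((\<epsilon>/2) powr (1/s))"
  have \<rho>: "0 < \<rho>" "\<rho> \<le> \<delta>" using \<open>0 < \<delta>\<close> \<open>0 < \<epsilon>\<close> unfolding \<rho>_def by auto
  have "\<rho> powr s \<le> ((\<epsilon>/2) powr (1/s)) powr s"
    using \<rho> assms(1) unfolding \<rho>_def by (intro powr_mono2) auto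
  also have "\<dots> = \<epsilon>/2" using assms(1) \<open>0 < \<epsilon>\<close> by (simp add: powr_powr)
  finally have "\<rho> powr s < \<epsilon>" using \<open>0 < \<epsilon>\<close> by simp
  moreover have "(\<Sum>i. if i \<in> {0::nat} then ennreal (\<rho> powr s) else 0) = ennreal (\<rho> powr s)"
    by (subst suminf_finite[of "{0}"]) auto
  ultimately show "\<exists>I c r. (\<forall>i\<in>I. 0 < r i \<and> r i \<le> \<delta>) \<and> {p} \<subseteq> (\<Union>i\<in>I. cball_d d (c i) (r i)) \<and>
      (\<Sum>i. if i \<in> (I::nat set) then ennreal (r i powr s) else 0) < ennreal \<epsilon>"
    using \<rho> assms(2)
    by (intro exI[of _ "{0}"] exI[of _ "\<lambda>_. p"] exI[of _ "\<lambda>_. \<rho>"]) (auto simp: cball_d_def ennreal_less_iff)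
qed

lemma haus_null_UN:
  fixes B :: "nat \<Rightarrow> 'a set"
  assumes "\<And>n. haus_null d s (B n)"
  shows "haus_null d s (\<Union>n. B n)"
  unfolding haus_null_def
proof (intro allI impI)
  fix \<delta> \<epsilon> :: real assume "0 < \<delta>" "0 < \<epsilon>"
  define e where "e n = \<epsilon> / 2 * (1/2) ^ Suc n" for n :: nat
  have "\<forall>n. \<exists>I c r. (\<forall>i\<in>I. 0 < r i \<and> r i \<le> \<delta>) \<and> B n \<subseteq> (\<Union>i\<in>I. cball_d d (c i) (r i)) \<and>
      (\<Sum>i. if i \<in> (I::nat set) then ennreal (r i powr s) else 0) < ennreal (e n)"
    using assms \<open>0 < \<delta>\<close> \<open>0 < \<epsilon>\<close> unfolding haus_null_def e_def by simp
  then obtain I c r where "\<forall>n. (\<forall>i\<in>I n. 0 < r n i \<and> r n i \<le> \<delta>) \<and>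
      B n \<subseteq> (\<Union>i\<in>I n. cball_d d (c n i) (r n i)) \<and>
      (\<Sum>i. if i \<in> I n then ennreal (r n i powr s) else 0) < ennreal (e n)"
    unfolding choice_iff by blast
  then have r: "\<And>n i. i \<in> I n \<Longrightarrow> 0 < r n i \<and> r n i \<le> \<delta>"
    and cover: "\<And>n. B n \<subseteq> (\<Union>i\<in>I n. cball_d d (c n i) (r n i))"
    and sum: "\<And>n. (\<Sum>i. if i \<in> I n then ennreal (r n i powr s) else 0) < ennreal (e n)"
    by blast+
  \<comment> \<open>Merge the countably many covers into one, indexed through \<open>prod_decode\<close>.\<close>
  define f where "f = (\<lambda>(n, i). if i \<in> I n then ennreal (r n i powr s) else 0)"
  define J where "J = {m. case prod_decode m of (n, i) \<Rightarrow> i \<in> I n}"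
  define c' where "c' m = (case prod_decode m of (n, i) \<Rightarrow> c n i)" for m
  define r' where "r' m = (case prod_decode m of (n, i) \<Rightarrow> r n i)" for m
  have "\<forall>m\<in>J. 0 < r' m \<and> r' m \<le> \<delta>"
    using r unfolding J_def r'_def by (auto split: prod.splits)
  moreover have "(\<Union>n. B n) \<subseteq> (\<Union>m\<in>J. cball_d d (c' m) (r' m))"
  proof
    fix y assume "y \<in> (\<Union>n. B n)"
    then obtain n i where "i \<in> I n" "y \<in> cball_d d (c n i) (r n i)" using cover by blast
    then show "y \<in> (\<Union>m\<in>J. cball_d d (c' m) (r' m))"
      unfolding J_def c'_def r'_def by (intro UN_I[of "prod_encode (n, i)"]) auto
  qed
  moreover have "(\<Sum>m. if m \<in> J then ennreal (r' m powr s) else 0) < ennreal \<epsilon>"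
  proof -
    have "(\<Sum>m. if m \<in> J then ennreal (r' m powr s) else 0) = (\<Sum>m. f (prod_decode m))"
      unfolding J_def r'_def f_def by (rule arg_cong[where f = suminf]) (auto split: prod.splits)
    also have "\<dots> = (\<Sum>n. \<Sum>i. f (n, i))" by (rule suminf_ennreal_2dimen) simp
    also have "\<dots> \<le> (\<Sum>n. ennreal (e n))"
      using sum unfolding f_def by (intro suminf_le) (auto intro: less_imp_le)
    also have "\<dots> = ennreal (\<epsilon> / 2 * 1)"
      unfolding e_def using \<open>0 < \<epsilon>\<close> by (intro suminf_ennreal_eq sums_mult power_half_series) auto
    also have "\<dots> < ennreal \<epsilon>" using \<open>0 < \<epsilon>\<close> by (simp add: ennreal_less_iff)
    finally show ?thesis .
  qed
  ultimately show "\<exists>I c r. (\<forall>i\<in>I. 0 < r i \<and> r i \<le> \<delta>) \<and> (\<Union>n. B n) \<subseteq> (\<Union>i\<in>I. cball_d d (c i) (r i)) \<and>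
      (\<Sum>i. if i \<in> (I::nat set) then ennreal (r i powr s) else 0) < ennreal \<epsilon>"
    by (intro exI[of _ J] exI[of _ c'] exI[of _ r'] conjI)
qed

lemma haus_null_Union:
  assumes "countable S" "\<And>B. B \<in> S \<Longrightarrow> haus_null d s B"
  shows "haus_null d s (\<Union>S)"
proof (cases "S = {}")
  case True then show ?thesis by (simp add: haus_null_empty)
next
  case False
  then have "\<Union>S = (\<Union>n. from_nat_into S n)" using range_from_nat_into[OF False assms(1)] by simp
  also have "haus_null d s \<dots>" using assms(2) from_nat_into[OF False] by (intro haus_null_UN) blast
  finally show ?thesis .
qed

section \<open>Comparing quasi-metrics piecewise\<close>

definition ball_lipschitz :: "('a \<Rightarrow> 'a \<Rightarrow> ennreal) \<Rightarrow> ('a \<Rightarrow> 'a \<Rightarrow> ennreal) \<Rightarrow> 'a set \<Rightarrow> bool" where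
  "ball_lipschitz d d' A \<longleftrightarrow> (\<exists>L>0. \<exists>\<delta>>0. \<forall>c x y r. 0 < r \<and> r \<le> \<delta> \<and> x \<in> A \<and> y \<in> A \<and>
      d c x \<le> ennreal r \<and> d c y \<le> ennreal r \<longrightarrow> d' x y \<le> ennreal (L * r))"

lemma haus_null_transfer:
  assumes "ball_lipschitz d d' A" "haus_null d s A"
  shows "haus_null d' s A"
  unfolding haus_null_def
proof (intro allI impI)
  fix \<delta> \<epsilon> :: real assume "0 < \<delta>" "0 < \<epsilon>"
  obtain L \<delta>0 where "0 < L" "0 < \<delta>0" and lip: "\<forall>c x y r. 0 < r \<and> r \<le> \<delta>0 \<and> x \<in> A \<and> y \<in> A \<and>
      d c x \<le> ennreal r \<and> d c y \<le> ennreal r \<longrightarrow> d' x y \<le> ennreal (L * r)"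
    using assms(1) unfolding ball_lipschitz_def by (elim exE conjE)
  have pos: "0 < min \<delta>0 (\<delta> / L)" "0 < \<epsilon> / L powr s" using \<open>0 < L\<close> \<open>0 < \<delta>0\<close> \<open>0 < \<delta>\<close> \<open>0 < \<epsilon>\<close> by auto
  obtain I c r where r: "\<forall>i\<in>I. 0 < r i \<and> r i \<le> min \<delta>0 (\<delta> / L)"
    and cover: "A \<subseteq> (\<Union>i\<in>I. cball_d d (c i) (r i))"
    and sum: "(\<Sum>i. if i \<in> (I::nat set) then ennreal (r i powr s) else 0) < ennreal (\<epsilon> / L powr s)"
    using assms(2)[unfolded haus_null_def, rule_format, OF pos] by (elim exE conjE)
  \<comment> \<open>Recentre every ball meeting \<open>A\<close> at a point of \<open>A\<close> and blow it up by the factor \<open>L\<close>.\<close>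
  define c' where "c' i = (SOME a. a \<in> A \<and> d (c i) a \<le> ennreal (r i))" for i
  have "\<forall>i\<in>I. 0 < L * r i \<and> L * r i \<le> \<delta>"
    using r \<open>0 < L\<close> by (auto simp: field_simps)
  moreover have "A \<subseteq> (\<Union>i\<in>I. cball_d d' (c' i) (L * r i))"
  proof
    fix y assume "y \<in> A"
    then obtain i where i: "i \<in> I" "d (c i) y \<le> ennreal (r i)" using cover unfolding cball_d_def
      by blast
    then have "\<exists>a. a \<in> A \<and> d (c i) a \<le> ennreal (r i)" using \<open>y \<in> A\<close> by blast
    then have "c' i \<in> A \<and> d (c i) (c' i) \<le> ennreal (r i)"
      unfolding c'_def by (rule someI_ex)
    then have "d' (c' i) y \<le> ennreal (L * r i)" using lip r i \<open>y \<in> A\<close> by auto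
    then show "y \<in> (\<Union>i\<in>I. cball_d d' (c' i) (L * r i))" using i(1) unfolding cball_d_def by blast
  qed
  moreover have "(\<Sum>i. if i \<in> I then ennreal ((L * r i) powr s) else 0) < ennreal \<epsilon>"
  proof -
    have "(if i \<in> I then ennreal ((L * r i) powr s) else 0)
        = ennreal (L powr s) * (if i \<in> I then ennreal (r i powr s) else 0)" for i
      using r \<open>0 < L\<close> by (simp add: powr_mult ennreal_mult)
    then have "(\<Sum>i. if i \<in> I then ennreal ((L * r i) powr s) else 0)
        = ennreal (L powr s) * (\<Sum>i. if i \<in> I then ennreal (r i powr s) else 0)"
      by (simp add: ennreal_suminf_cmult)
    also have "\<dots> < ennreal (L powr s) * ennreal (\<epsilon> / L powr s)"
      using sum \<open>0 < L\<close> by (intro ennreal_mult_strict_left_mono) simp_all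
    also have "\<dots> = ennreal \<epsilon>" using \<open>0 < \<epsilon>\<close> \<open>0 < L\<close> by (simp flip: ennreal_mult)
    finally show ?thesis .
  qed
  ultimately show "\<exists>I c r. (\<forall>i\<in>I. 0 < r i \<and> r i \<le> \<delta>) \<and> A \<subseteq> (\<Union>i\<in>I. cball_d d' (c i) (r i)) \<and>
      (\<Sum>i. if i \<in> (I::nat set) then ennreal (r i powr s) else 0) < ennreal \<epsilon>"
    by (intro exI[of _ I] exI[of _ c'] exI[of _ "\<lambda>i. L * r i"] conjI)
qed

lemma ball_lipschitz_if_le:
  fixes d d' :: "'a \<Rightarrow> 'a \<Rightarrow> ennreal"
  assumes sym: "\<And>x y. d x y = d y x"
    and triangle: "\<And>x y z. d x y \<le> ennreal K * max (d x z) (d z y)" and "K \<ge> 1"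
    and le: "\<And>x y. x \<in> A \<Longrightarrow> y \<in> A \<Longrightarrow> d' x y \<le> ennreal C * d x y" and "0 < C"
  shows "ball_lipschitz d d' A"
proof -
  have "d' x y \<le> ennreal (C * K * r)"
    if "0 < r" "x \<in> A" "y \<in> A" "d c x \<le> ennreal r" "d c y \<le> ennreal r" for c x y r
  proof -
    have "d' x y \<le> ennreal C * d x y" using le that by blast
    also have "\<dots> \<le> ennreal C * (ennreal K * max (d x c) (d c y))"
      by (intro mult_left_mono triangle) simp
    also have "\<dots> \<le> ennreal C * (ennreal K * ennreal r)"
      using that sym[of x c] by (intro mult_left_mono) auto
    also have "\<dots> = ennreal (C * K * r)" using \<open>0 < C\<close> \<open>K \<ge> 1\<close> that
      by (simp add: ennreal_mult mult.assoc)
    finally show ?thesis .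
  qed
  then show ?thesis unfolding ball_lipschitz_def using \<open>0 < C\<close> \<open>K \<ge> 1\<close>
    by (intro exI[of _ "C * K"] exI[of _ 1]) auto
qed

lemma ball_lipschitz_if_ball_bound:
  fixes d e :: "'a \<Rightarrow> 'a \<Rightarrow> ennreal"
  assumes sym: "\<And>x y. d x y = d y x"
    and triangle: "\<And>x y z. d x y \<le> ennreal K * max (d x z) (d z y)" and "K \<ge> 1"
    and "0 < M" "0 < \<delta>"
    and bound: "\<And>c x r. 0 < r \<Longrightarrow> r \<le> \<delta> \<Longrightarrow> x \<in> A \<Longrightarrow> e c x \<le> ennreal r \<Longrightarrow> d c x \<le> ennreal (M * r)"
  shows "ball_lipschitz e d A"
proof -
  have "d x y \<le> ennreal (K * M * r)"
    if "0 < r" "r \<le> \<delta>" "x \<in> A" "y \<in> A" "e c x \<le> ennreal r" "e c y \<le> ennreal r" for c x y r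
  proof -
    have "d x y \<le> ennreal K * max (d c x) (d c y)" using triangle[of x y c] sym[of x c] by simp
    also have "\<dots> \<le> ennreal K * ennreal (M * r)" using bound that by (intro mult_left_mono) auto
    also have "\<dots> = ennreal (K * M * r)" using \<open>K \<ge> 1\<close> \<open>0 < M\<close> \<open>0 < r\<close>
      by (simp add: ennreal_mult mult.assoc)
    finally show ?thesis .
  qed
  then show ?thesis unfolding ball_lipschitz_def using \<open>K \<ge> 1\<close> \<open>0 < M\<close> \<open>0 < \<delta>\<close>
    by (intro exI[of _ "K * M"] exI[of _ \<delta>]) auto
qed

lemma haus_null_piecewise:
  assumes "0 < s" "\<And>x. d' x x = 0" "countable F" "countable S" "A \<subseteq> F \<union> \<Union>S"
    and "\<And>B. B \<in> S \<Longrightarrow> haus_null d s B" "\<And>B. B \<in> S \<Longrightarrow> ball_lipschitz d d' B"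
  shows "haus_null d' s A"
proof -
  have "haus_null d' s B" if "B \<in> S" for B
    using haus_null_transfer assms(6,7) that by blast
  then have "haus_null d' s (\<Union>(S \<union> (\<lambda>p. {p}) ` F))"
    using assms(1-4) by (intro haus_null_Union) (auto intro: haus_null_singleton)
  then show ?thesis by (rule haus_null_subset[rotated]) (use assms(5) in blast)
qed

lemma dimH_eq_piecewise:
  assumes "infpts d \<noteq> UNIV" "infpts d' \<noteq> UNIV" "\<And>x. d x x = 0" "\<And>x. d' x x = 0"
    and "countable F" "countable S" "F \<union> \<Union>S = UNIV"
    and "\<And>B. B \<in> S \<Longrightarrow> B \<inter> (infpts d \<union> infpts d') = {}"
    and "\<And>B. B \<in> S \<Longrightarrow> ball_lipschitz d d' B" "\<And>B. B \<in> S \<Longrightarrow> ball_lipschitz d' d B"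
  shows "dimH d = dimH d'"
proof (rule dimH_eq_if_same_null_sets)
  fix s
  have transfer: "haus_null e' s (UNIV - infpts e')"
    if null: "haus_null e s (UNIV - infpts e)" and "0 < s" "\<And>x. e' x x = 0"
      and disjoint: "\<And>B. B \<in> S \<Longrightarrow> B \<inter> infpts e = {}"
      and lip: "\<And>B. B \<in> S \<Longrightarrow> ball_lipschitz e e' B"
    for e e' :: "'a \<Rightarrow> 'a \<Rightarrow> ennreal"
  proof (rule haus_null_piecewise[OF that(2,3) assms(5,6)])
    show "UNIV - infpts e' \<subseteq> F \<union> \<Union>S" using assms(7) by blast
    show "haus_null e s B" if "B \<in> S" for B
      using disjoint[OF that] by (intro haus_null_subset[OF _ null]) blast
  qed (rule lip)
  show "haus_null d s (UNIV - infpts d) \<longleftrightarrow> haus_null d' s (UNIV - infpts d')"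
  proof (cases "0 < s")
    case True
    show ?thesis
    proof
      assume "haus_null d s (UNIV - infpts d)"
      then show "haus_null d' s (UNIV - infpts d')"
        by (rule transfer) (use True assms(4,8,9) in auto)
    next
      assume "haus_null d' s (UNIV - infpts d')"
      then show "haus_null d s (UNIV - infpts d)"
        by (rule transfer) (use True assms(3,8,10) in auto)
    qed
  next
    case False
    then have "s \<le> 0" by simp
    have "\<not> haus_null d s (UNIV - infpts d)" using \<open>s \<le> 0\<close> assms(1) by (intro not_haus_null_nonpos) auto
    moreover have "\<not> haus_null d' s (UNIV - infpts d')" using \<open>s \<le> 0\<close> assms(2)
      by (intro not_haus_null_nonpos) auto
    ultimately show ?thesis by blast
  qed
qed

definition dyadic_piece :: "'a set \<Rightarrow> ('a \<Rightarrow> real) \<Rightarrow> int \<Rightarrow> 'a set" where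
  "dyadic_piece E f k = {x. x \<notin> E \<and> 2 powr k \<le> f x \<and> f x < 2 powr (k + 1)}"

lemma dyadic_piece_exists:
  assumes "x \<notin> E" "0 < f x" obtains k where "x \<in> dyadic_piece E f k"
proof -
  have "\<lfloor>log 2 (f x)\<rfloor> \<le> log 2 (f x)" "log 2 (f x) < \<lfloor>log 2 (f x)\<rfloor> + 1" by linarith+
  then have "2 powr \<lfloor>log 2 (f x)\<rfloor> \<le> 2 powr (log 2 (f x))"
    "2 powr (log 2 (f x)) < 2 powr (\<lfloor>log 2 (f x)\<rfloor> + 1)"
    by (auto intro: powr_mono powr_less_mono)
  then show ?thesis using assms by (intro that[of "\<lfloor>log 2 (f x)\<rfloor>"]) (simp add: dyadic_piece_def)
qed

lemma dyadic_piece_bounds: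
  assumes "x \<in> dyadic_piece E f i" "y \<in> dyadic_piece E' g j"
  shows "2 powr i * 2 powr j \<le> f x * g y" "f x * g y \<le> 2 powr (i + 1) * 2 powr (j + 1)"
proof -
  have "0 \<le> f x" "0 \<le> g y" using assms unfolding dyadic_piece_def
    by (auto intro: order.trans[OF powr_ge_zero])
  then show "2 powr i * 2 powr j \<le> f x * g y" "f x * g y \<le> 2 powr (i + 1) * 2 powr (j + 1)"
    using assms unfolding dyadic_piece_def by (auto intro!: mult_mono)
qed

lemma quasi_metric_sym_eq_0:
  assumes "quasi_metric d" shows "d x y = d y x" "d x y = 0 \<longleftrightarrow> x = y"
proof -
  have "semi_metric d \<or> ext_semi_metric d" using assms unfolding quasi_metric_def by (elim conjE)
  then have "(\<forall>x y. d x y = d y x) \<and> (\<forall>x y. d x y = 0 \<longleftrightarrow> x = y)"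
  proof
    assume "semi_metric d" then show ?thesis unfolding semi_metric_def by (elim conjE) (intro conjI)
  next
    assume "ext_semi_metric d" then show ?thesis unfolding ext_semi_metric_def
      by (elim conjE) (intro conjI)
  qed
  then show "d x y = d y x" "d x y = 0 \<longleftrightarrow> x = y" by blast+
qed

lemmas quasi_metric_sym = quasi_metric_sym_eq_0(1)
lemmas quasi_metric_eq_0_iff = quasi_metric_sym_eq_0(2)

lemma quasi_metric_triangle:
  assumes "quasi_metric d"
  obtains K where "K \<ge> 1" "\<And>x y z. d x y \<le> ennreal K * max (d x z) (d z y)"
  using assms unfolding quasi_metric_def by blast

lemma three_points_avoid:
  assumes "\<exists>x y z :: 'a. distinct [x, y, z]" obtains u :: 'a where "u \<noteq> p" "u \<noteq> q"
proof -
  obtain x y z :: 'a where "distinct [x, y, z]" using assms by blast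
  then consider "x \<noteq> p \<and> x \<noteq> q" | "y \<noteq> p \<and> y \<noteq> q" | "z \<noteq> p \<and> z \<noteq> q" by auto
  then show ?thesis using that by metis
qed

lemma quasi_metric_infpts:
  fixes d :: "'a \<Rightarrow> 'a \<Rightarrow> ennreal"
  assumes "quasi_metric d" and three: "\<exists>x y z :: 'a. distinct [x, y, z]"
  shows "\<exists>\<omega>. infpts d \<subseteq> {\<omega>}" and "u \<notin> infpts d \<Longrightarrow> v \<notin> infpts d \<Longrightarrow> d u v \<noteq> \<infinity>"
proof -
  have "(\<exists>\<omega>. infpts d \<subseteq> {\<omega>}) \<and> (\<forall>u v. u \<notin> infpts d \<longrightarrow> v \<notin> infpts d \<longrightarrow> d u v \<noteq> \<infinity>)"
  proof (cases "semi_metric d")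
    case True
    then have finite: "d u v \<noteq> \<infinity>" for u v unfolding semi_metric_def by blast
    have "p \<notin> infpts d" for p
    proof
      assume "p \<in> infpts d"
      obtain u where "u \<noteq> p" using three_points_avoid[OF three] by blast
      then show False using \<open>p \<in> infpts d\<close> finite[of u p] unfolding infpts_def by blast
    qed
    then have "infpts d = {}" by blast
    then show ?thesis using finite by simp
  next
    case False
    then have "ext_semi_metric d" using assms(1) unfolding quasi_metric_def by blast
    then obtain \<omega> where \<omega>: "\<forall>x. x \<noteq> \<omega> \<longrightarrow> d x \<omega> = \<infinity>"
      and finite: "\<forall>x y. x \<noteq> \<omega> \<longrightarrow> y \<noteq> \<omega> \<longrightarrow> d x y \<noteq> \<infinity>"
      unfolding ext_semi_metric_def by (elim conjE ex1E)
    have "\<omega> \<in> infpts d" using \<omega> unfolding infpts_def by blast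
    have "p = \<omega>" if "p \<in> infpts d" for p
    proof (rule ccontr)
      assume "p \<noteq> \<omega>"
      obtain u where "u \<noteq> p" "u \<noteq> \<omega>" using three_points_avoid[OF three] .
      then show False using that finite \<open>p \<noteq> \<omega>\<close> unfolding infpts_def by blast
    qed
    then have "infpts d \<subseteq> {\<omega>}" by blast
    moreover have "d u v \<noteq> \<infinity>" if "u \<notin> infpts d" "v \<notin> infpts d" for u v
    proof -
      have "u \<noteq> \<omega>" "v \<noteq> \<omega>" using that \<open>\<omega> \<in> infpts d\<close> by auto
      then show ?thesis using finite by blast
    qed
    ultimately show ?thesis by blast
  qed
  then show "\<exists>\<omega>. infpts d \<subseteq> {\<omega>}" and "u \<notin> infpts d \<Longrightarrow> v \<notin> infpts d \<Longrightarrow> d u v \<noteq> \<infinity>"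
    by blast+
qed

lemma quasi_metric_infpts_finite:
  fixes d :: "'a \<Rightarrow> 'a \<Rightarrow> ennreal"
  assumes "quasi_metric d" "\<exists>x y z :: 'a. distinct [x, y, z]"
  shows "finite (infpts d)"
  using quasi_metric_infpts(1)[OF assms] finite_subset by blast

lemma quasi_metric_infpts_ne_UNIV:
  fixes d :: "'a \<Rightarrow> 'a \<Rightarrow> ennreal"
  assumes "quasi_metric d" "\<exists>x y z :: 'a. distinct [x, y, z]"
  shows "infpts d \<noteq> UNIV"
proof -
  obtain \<omega> where "infpts d \<subseteq> {\<omega>}" using quasi_metric_infpts(1)[OF assms] by blast
  moreover obtain u where "u \<noteq> \<omega>" using three_points_avoid[OF assms(2)] by blast
  ultimately show ?thesis by blast
qed

lemma quasi_metric_finite_off_infpts: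
  fixes d :: "'a \<Rightarrow> 'a \<Rightarrow> ennreal"
  assumes "quasi_metric d" "\<exists>x y z :: 'a. distinct [x, y, z]" "u \<notin> infpts d" "v \<notin> infpts d"
  shows "d u v = ennreal (enn2real (d u v))" and "u \<noteq> v \<Longrightarrow> 0 < enn2real (d u v)"
proof -
  have "d u v \<noteq> \<infinity>" using quasi_metric_infpts(2)[OF assms] .
  then show "d u v = ennreal (enn2real (d u v))" by (simp add: less_top[symmetric])
  show "0 < enn2real (d u v)" if "u \<noteq> v"
    using \<open>d u v \<noteq> \<infinity>\<close> quasi_metric_eq_0_iff[OF assms(1)] that
    by (simp add: enn2real_positive_iff less_top[symmetric] zero_less_iff_neq_zero)
qed

lemma dimH_scale:
  fixes d :: "'a \<Rightarrow> 'a \<Rightarrow> ennreal"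
  assumes q: "quasi_metric d" and three: "\<exists>x y z :: 'a. distinct [x, y, z]" and "0 < l"
  shows "dimH (\<lambda>x y. ennreal l * d x y) = dimH d"
proof -
  define dl where "dl x y = ennreal l * d x y" for x y
  obtain K where "K \<ge> 1" and triangle: "\<And>x y z. d x y \<le> ennreal K * max (d x z) (d z y)"
    using quasi_metric_triangle[OF q] by blast
  have infpts_dl: "infpts dl = infpts d"
    unfolding infpts_def dl_def using \<open>0 < l\<close> by (simp add: ennreal_mult_eq_top_iff)
  have mono_mult: "mono ((*) c)" for c :: ennreal by (rule monoI, rule mult_left_mono) simp_all
  have triangle_dl: "dl x y \<le> ennreal K * max (dl x z) (dl z y)" for x y z
  proof -
    have "dl x y \<le> ennreal l * (ennreal K * max (d x z) (d z y))"
      unfolding dl_def by (intro mult_left_mono triangle) simp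
    also have "\<dots> = ennreal K * max (dl x z) (dl z y)"
      unfolding dl_def max_of_mono[OF mono_mult] by (simp add: ac_simps)
    finally show ?thesis .
  qed
  have "dimH d = dimH dl"
  proof (rule dimH_eq_piecewise[where F = "infpts d" and S = "{UNIV - infpts d}"])
    show "infpts d \<noteq> UNIV" "infpts dl \<noteq> UNIV"
      using quasi_metric_infpts_ne_UNIV[OF q three] infpts_dl by simp_all
    show "d x x = 0" "dl x x = 0" for x
      unfolding dl_def using quasi_metric_eq_0_iff[OF q] by simp_all
    show "ball_lipschitz d dl B" if "B \<in> {UNIV - infpts d}" for B
      by (rule ball_lipschitz_if_le[where K = K and C = l])
        (use quasi_metric_sym[OF q] triangle \<open>K \<ge> 1\<close> \<open>0 < l\<close> in \<open>auto simp: dl_def\<close>)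
    show "ball_lipschitz dl d B" if "B \<in> {UNIV - infpts d}" for B
    proof (rule ball_lipschitz_if_le[where K = K and C = "1 / l"])
      show "dl x y = dl y x" for x y unfolding dl_def using quasi_metric_sym[OF q] by simp
      show "d x y \<le> ennreal (1 / l) * dl x y" for x y
        unfolding dl_def using \<open>0 < l\<close> by (simp add: mult.assoc[symmetric] flip: ennreal_mult)
    qed (use triangle_dl \<open>K \<ge> 1\<close> \<open>0 < l\<close> in auto)
  qed (use infpts_dl quasi_metric_infpts_finite[OF q three] in \<open>auto intro: countable_finite\<close>)
  then show ?thesis unfolding dl_def by simp
qed

section \<open>Involution\<close>

lemma enn2real_triangle:
  fixes a b c :: ennreal
  assumes "a \<le> ennreal K * max b c" "K \<ge> 0" "b < top" "c < top"
  shows "enn2real a \<le> K * max (enn2real b) (enn2real c)"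
proof -
  have "enn2real a \<le> enn2real (ennreal K * max b c)"
    using assms by (intro enn2real_mono) (auto simp: ennreal_mult_less_top)
  also have "\<dots> = K * max (enn2real b) (enn2real c)"
  proof (cases "b \<le> c")
    case True
    then have "enn2real b \<le> enn2real c" using assms(4) by (rule enn2real_mono)
    then show ?thesis using True \<open>K \<ge> 0\<close> by (simp add: enn2real_mult max_absorb2)
  next
    case False
    then have "c \<le> b" by simp
    then have "enn2real c \<le> enn2real b" using assms(3) by (rule enn2real_mono)
    then show ?thesis using \<open>c \<le> b\<close> \<open>K \<ge> 0\<close> by (simp add: enn2real_mult max_absorb1)
  qed
  finally show ?thesis .
qed

lemma involution_real:
  fixes d :: "'a \<Rightarrow> 'a \<Rightarrow> ennreal"
  assumes q: "quasi_metric d" and three: "\<exists>x y z :: 'a. distinct [x, y, z]" and p0: "p0 \<notin> infpts d"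
    and u: "u \<notin> infpts d" "u \<noteq> p0" and v: "v \<notin> infpts d" "v \<noteq> p0" and "u \<noteq> v"
  shows "involution d p0 u v = ennreal (enn2real (d u v) / (enn2real (d u p0) * enn2real (d p0 v)))"
proof -
  note finite = quasi_metric_finite_off_infpts[OF q three]
  have "involution d p0 u v = d u v / (d u p0 * d p0 v)"
    unfolding involution_def using u v \<open>u \<noteq> v\<close> by simp
  also have "\<dots> = ennreal (enn2real (d u v)) / ennreal (enn2real (d u p0) * enn2real (d p0 v))"
    using finite(1)[OF u(1) v(1)] finite(1)[OF u(1) p0] finite(1)[OF p0 v(1)]
      by (simp add: ennreal_mult)
  also have "\<dots> = ennreal (enn2real (d u v) / (enn2real (d u p0) * enn2real (d p0 v)))"
    using finite(2)[OF u(1) p0 u(2)] finite(2)[OF p0 v(1) v(2)[symmetric]]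
      by (intro divide_ennreal) simp_all
  finally show ?thesis .
qed

lemma infpts_involution:
  fixes d :: "'a \<Rightarrow> 'a \<Rightarrow> ennreal"
  assumes q: "quasi_metric d" and three: "\<exists>x y z :: 'a. distinct [x, y, z]" and p0: "p0 \<notin> infpts d"
  shows "infpts (involution d p0) \<subseteq> {p0}"
proof
  fix p assume p: "p \<in> infpts (involution d p0)"
  show "p \<in> {p0}"
  proof (rule ccontr)
    assume "p \<notin> {p0}"
    obtain u where u: "u \<noteq> p" "u \<noteq> p0" using three_points_avoid[OF three] .
    have pos: "d a b \<noteq> 0" if "a \<noteq> b" for a b using quasi_metric_eq_0_iff[OF q] that by simp
    have "involution d p0 u p = \<infinity>" using p u unfolding infpts_def by blast
    moreover have "involution d p0 u p \<noteq> \<infinity>"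
    proof (cases "u \<in> infpts d")
      case True
      then show ?thesis using u pos[of p0 p] \<open>p \<notin> {p0}\<close>
        by (simp add: involution_def ennreal_divide_eq_top_iff)
    next
      case False
      moreover have "p \<in> infpts d \<or> d u p \<noteq> \<infinity>"
        using quasi_metric_infpts(2)[OF q three False] by blast
      ultimately show ?thesis using u pos[of u p0] pos[of p0 p] \<open>p \<notin> {p0}\<close>
        by (auto simp: involution_def ennreal_divide_eq_top_iff)
    qed
    ultimately show False by simp
  qed
qed

lemma involution_le_on_annulus:
  fixes d :: "'a \<Rightarrow> 'a \<Rightarrow> ennreal"
  assumes q: "quasi_metric d" and three: "\<exists>x y z :: 'a. distinct [x, y, z]" and p0: "p0 \<notin> infpts d"
    and xy: "x \<in> dyadic_piece ({p0} \<union> infpts d) (\<lambda>x. enn2real (d x p0)) k"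
      "y \<in> dyadic_piece ({p0} \<union> infpts d) (\<lambda>x. enn2real (d x p0)) k"
  shows "involution d p0 x y \<le> ennreal (1 / (2 powr k * 2 powr k)) * d x y"
proof (cases "x = y")
  case False
  define D where "D u v = enn2real (d u v)" for u v
  have x: "x \<notin> infpts d" "x \<noteq> p0" and y: "y \<notin> infpts d" "y \<noteq> p0"
    using xy unfolding dyadic_piece_def by auto
  have le: "2 powr k * 2 powr k \<le> D x p0 * D p0 y"
    using dyadic_piece_bounds(1)[OF xy] quasi_metric_sym[OF q, of p0 y] by (simp add: D_def)
  have pos: "0 < 2 powr k * 2 powr k" by simp
  then have "0 < D x p0 * D p0 y" using le by linarith
  then have "D x y / (D x p0 * D p0 y) \<le> D x y / (2 powr k * 2 powr k)"
    using le pos by (intro divide_left_mono) (simp_all add: D_def)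
  then have "involution d p0 x y \<le> ennreal (1 / (2 powr k * 2 powr k) * D x y)"
    unfolding D_def using involution_real[OF q three p0 x y False] by (simp add: ennreal_leI)
  also have "\<dots> = ennreal (1 / (2 powr k * 2 powr k)) * ennreal (D x y)"
    by (rule ennreal_mult) (simp_all add: D_def)
  also have "\<dots> = ennreal (1 / (2 powr k * 2 powr k)) * d x y"
    unfolding D_def by (simp only: quasi_metric_finite_off_infpts(1)[OF q three x(1) y(1), symmetric])
  finally show ?thesis .
qed (simp add: involution_def)

text \<open>If \<open>w\<close> were large compared with \<open>v\<close>, then \<open>u\<close> would be comparable to \<open>w\<close> and
  \<open>w / (u v)\<close> comparable to \<open>1 / v\<close>, which is not small.\<close>
lemma quasi_ratio_bound:
  fixes u v w r K :: real
  assumes "0 < v" "0 < w" "0 \<le> r" "0 \<le> u" "w \<le> r * u * v" "u \<le> K * max w v" "r * K * v < 1"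
  shows "w \<le> r * K * v\<^sup>2"
proof (cases "w \<le> v")
  case True
  then have "u \<le> K * v" using assms(6) by (simp add: max_absorb2)
  then have "r * u * v \<le> r * (K * v) * v" using assms(1,3)
    by (intro mult_right_mono mult_left_mono) auto
  then show ?thesis using assms(5) by (simp add: power2_eq_square ac_simps)
next
  case False
  then have "u \<le> K * w" using assms(6) by (simp add: max_absorb1)
  then have "r * u * v \<le> r * (K * w) * v" using assms(1,3)
    by (intro mult_right_mono mult_left_mono) auto
  moreover have "r * K * v * w < 1 * w" using assms(2,7) by (intro mult_strict_right_mono)
  ultimately show ?thesis using assms(5) by (simp add: ac_simps)
qed

lemma dist_le_if_involution_le:
  fixes d :: "'a \<Rightarrow> 'a \<Rightarrow> ennreal"
  assumes q: "quasi_metric d" and three: "\<exists>x y z :: 'a. distinct [x, y, z]" and p0: "p0 \<notin> infpts d"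
    and x: "x \<notin> infpts d" "x \<noteq> p0"
    and triangle: "\<And>x y z. d x y \<le> ennreal K * max (d x z) (d z y)" and "K \<ge> 1"
    and "enn2real (d x p0) \<le> R" and "0 < r" "r * K * R < 1"
    and inv: "involution d p0 c x \<le> ennreal r"
  shows "d c x \<le> ennreal (K * R\<^sup>2 * r)"
proof -
  note finite = quasi_metric_finite_off_infpts[OF q three]
  define v where "v = enn2real (d x p0)"
  have "0 < v" unfolding v_def using finite(2)[OF x(1) p0 x(2)] .
  have dxp0: "d x p0 = ennreal v" "d p0 x = ennreal v"
    unfolding v_def using finite(1)[OF x(1) p0] quasi_metric_sym[OF q] by metis+
  have "r * K * v \<le> r * K * R" using \<open>0 < r\<close> \<open>K \<ge> 1\<close> \<open>enn2real (d x p0) \<le> R\<close>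
    unfolding v_def by (intro mult_left_mono) simp_all
  then have small: "r * K * v < 1" using \<open>r * K * R < 1\<close> by linarith
  consider "c = x" | "c \<in> infpts d" | "c = p0" | "c \<notin> infpts d" "c \<noteq> p0" "c \<noteq> x" by blast
  then show ?thesis
  proof cases
    case 1
    then show ?thesis using quasi_metric_eq_0_iff[OF q, of x x] by simp
  next
    case 2
    then have "involution d p0 c x = ennreal (1 / v)"
      using x dxp0 \<open>0 < v\<close> by (auto simp: involution_def divide_ennreal[symmetric])
    then have "1 / v \<le> r" using inv \<open>0 < r\<close> by simp
    then have "1 \<le> r * v" using \<open>0 < v\<close> by (simp add: field_simps)
    also have "\<dots> \<le> r * K * v" using \<open>0 < r\<close> \<open>0 < v\<close> \<open>K \<ge> 1\<close> by simp
    finally show ?thesis using small by simp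
  next
    case 3
    then have "involution d p0 c x = \<infinity>"
      using x p0 dxp0 \<open>0 < v\<close> quasi_metric_eq_0_iff[OF q, of p0 p0] by (simp add: involution_def)
    then show ?thesis using inv by (simp add: top_unique)
  next
    case 4
    define u w where "u = enn2real (d c p0)" and "w = enn2real (d c x)"
    have "0 < u" "0 < w" unfolding u_def w_def using finite(2) 4 x p0 by blast+
    have "ennreal (w / (u * v)) \<le> ennreal r"
      using inv involution_real[OF q three p0 4(1,2) x 4(3)] dxp0 quasi_metric_sym[OF q, of p0 x]
      unfolding u_def v_def w_def by simp
    then have w_le: "w \<le> r * u * v" using \<open>0 < r\<close> \<open>0 < u\<close> \<open>0 < v\<close> by (simp add: field_simps)
    have "u \<le> K * max w v"
      unfolding u_def w_def v_def using \<open>K \<ge> 1\<close> quasi_metric_infpts(2)[OF q three] 4(1) x(1) p0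
      by (intro enn2real_triangle[OF triangle[of c p0 x]]) (auto simp: less_top[symmetric])
    with w_le have "w \<le> r * K * v\<^sup>2"
      using \<open>0 < v\<close> \<open>0 < w\<close> \<open>0 < r\<close> \<open>0 < u\<close> small by (intro quasi_ratio_bound) simp_all
    also have "\<dots> \<le> K * R\<^sup>2 * r"
      using \<open>0 < r\<close> \<open>0 < v\<close> \<open>K \<ge> 1\<close> \<open>enn2real (d x p0) \<le> R\<close>
      unfolding v_def by (simp add: power_mono ac_simps)
    finally show ?thesis using finite(1)[OF 4(1) x(1)] unfolding w_def by (metis ennreal_leI)
  qed
qed

lemma dimH_involution:
  fixes d :: "'a \<Rightarrow> 'a \<Rightarrow> ennreal"
  assumes q: "quasi_metric d" and three: "\<exists>x y z :: 'a. distinct [x, y, z]" and p0: "p0 \<notin> infpts d"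
  shows "dimH (involution d p0) = dimH d"
proof -
  define dv where "dv = involution d p0"
  define D where "D u v = enn2real (d u v)" for u v
  note finite = quasi_metric_finite_off_infpts[OF q three, folded D_def]
  obtain K where "K \<ge> 1" and triangle: "\<And>x y z. d x y \<le> ennreal K * max (d x z) (d z y)"
    using quasi_metric_triangle[OF q] by blast
  define A where "A = dyadic_piece ({p0} \<union> infpts d) (\<lambda>x. D x p0)"
  have cover: "({p0} \<union> infpts d) \<union> \<Union>(range A) = UNIV"
  proof -
    have "x \<in> \<Union>(range A)" if x: "x \<notin> {p0} \<union> infpts d" for x
    proof -
      have "0 < D x p0" using finite(2)[OF _ p0] x by blast
      then obtain k where "x \<in> A k"
        unfolding A_def using dyadic_piece_exists[OF x, of "\<lambda>x. D x p0"] by blast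
      then show ?thesis by blast
    qed
    then show ?thesis by blast
  qed
  have infpts_dv: "infpts dv \<subseteq> {p0}" unfolding dv_def by (rule infpts_involution[OF q three p0])
  moreover obtain u where "u \<noteq> p0" using three_points_avoid[OF three] by blast
  ultimately have "infpts dv \<noteq> UNIV" by blast
  have "dimH d = dimH dv"
  proof (rule dimH_eq_piecewise[OF _ _ _ _ _ _ cover])
    fix B assume "B \<in> range A"
    then obtain k where B: "B = A k" by blast
    show "ball_lipschitz d dv B" unfolding B
    proof (rule ball_lipschitz_if_le[where C = "1 / (2 powr k * 2 powr k)",
          OF quasi_metric_sym[OF q] triangle \<open>K \<ge> 1\<close>])
      show "dv x y \<le> ennreal (1 / (2 powr k * 2 powr k)) * d x y" if "x \<in> A k" "y \<in> A k" for x y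
        using involution_le_on_annulus[OF q three p0] that unfolding A_def D_def dv_def by blast
    qed simp
    define R where "R = 2 powr (k + 1)"
    have "0 < R" unfolding R_def by simp
    show "ball_lipschitz dv d B" unfolding B
    proof (rule ball_lipschitz_if_ball_bound[OF quasi_metric_sym[OF q] triangle \<open>K \<ge> 1\<close>])
      show "0 < K * R\<^sup>2" "0 < 1 / (2 * K * R)" using \<open>K \<ge> 1\<close> \<open>0 < R\<close> by simp_all
      show "d c x \<le> ennreal (K * R\<^sup>2 * r)"
        if "0 < r" "r \<le> 1 / (2 * K * R)" "x \<in> A k" "dv c x \<le> ennreal r" for c x r
      proof (rule dist_le_if_involution_le[OF q three p0 _ _ triangle \<open>K \<ge> 1\<close>])
        show "x \<notin> infpts d" "x \<noteq> p0" "enn2real (d x p0) \<le> R"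
          using \<open>x \<in> A k\<close> unfolding A_def dyadic_piece_def D_def R_def by auto
        have "r * K * R \<le> 1 / 2" using that(2) \<open>K \<ge> 1\<close> \<open>0 < R\<close> by (simp add: field_simps)
        then show "r * K * R < 1" by simp
      qed (use that in \<open>simp_all add: dv_def\<close>)
    qed
  next
    fix B assume "B \<in> range A"
    then show "B \<inter> (infpts d \<union> infpts dv) = {}" using infpts_dv unfolding A_def dyadic_piece_def
      by blast
  qed (use quasi_metric_infpts_ne_UNIV[OF q three] \<open>infpts dv \<noteq> UNIV\<close> quasi_metric_eq_0_iff[OF q]
        quasi_metric_infpts_finite[OF q three]
      in \<open>auto simp: dv_def involution_def intro: countable_finite\<close>)
  then show ?thesis unfolding dv_def by simp
qed

section \<open>Cross-ratios\<close>

lemma Phibar_eq_imp_cross_mult: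
  assumes "Phibar (a, b, c) = Phibar (a', b', c')"
    and "0 < a" "0 < b" "0 < c" "0 < a'" "0 < b'" "0 < c'"
  shows "a * b' = a' * b"
proof -
  have "ln (a / b) = ln (a' / b')" using assms by (simp add: Phibar_def)
  then have "a / b = a' / b'" using assms by simp
  then show ?thesis using assms by (simp add: field_simps)
qed

lemma crt_rep_off_infpts:
  fixes d :: "'a \<Rightarrow> 'a \<Rightarrow> ennreal"
  assumes q: "quasi_metric d" and three: "\<exists>x y z :: 'a. distinct [x, y, z]"
    and "x \<notin> infpts d" "y \<notin> infpts d" "a \<notin> infpts d" "b \<notin> infpts d"
  shows "crt_rep d (x, y, a, b) = (enn2real (d x y) * enn2real (d a b),
    enn2real (d x a) * enn2real (d y b), enn2real (d x b) * enn2real (d y a))"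
  using assms quasi_metric_infpts(2)[OF q three] quasi_metric_sym[OF q, of b y]
  by (simp add: crt_rep_def Dfin_def)

definition dist_ratio :: "('a \<Rightarrow> 'a \<Rightarrow> ennreal) \<Rightarrow> ('a \<Rightarrow> 'a \<Rightarrow> ennreal) \<Rightarrow> 'a \<Rightarrow> 'a \<Rightarrow> real" where
  "dist_ratio d d' u v = enn2real (d' u v) / enn2real (d u v)"

lemma dist_ratio_pos:
  fixes d d' :: "'a \<Rightarrow> 'a \<Rightarrow> ennreal"
  assumes "quasi_metric d" "quasi_metric d'" "\<exists>x y z :: 'a. distinct [x, y, z]"
    and "u \<notin> infpts d \<union> infpts d'" "v \<notin> infpts d \<union> infpts d'" "u \<noteq> v"
  shows "0 < dist_ratio d d' u v"
  using assms quasi_metric_finite_off_infpts(2)[OF assms(1,3)]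
    quasi_metric_finite_off_infpts(2)[OF assms(2,3)]
  unfolding dist_ratio_def by simp

lemma dist_ratio_cross:
  fixes d d' :: "'a \<Rightarrow> 'a \<Rightarrow> ennreal"
  assumes q: "quasi_metric d" and q': "quasi_metric d'" and three: "\<exists>x y z :: 'a. distinct [x, y, z]"
    and same: "Phibar (crt_rep d (x, y, a, b)) = Phibar (crt_rep d' (x, y, a, b))"
    and "distinct [x, y, a, b]"
    and off: "\<And>u. u \<in> {x, y, a, b} \<Longrightarrow> u \<notin> infpts d \<union> infpts d'"
  shows "dist_ratio d d' x y * dist_ratio d d' a b = dist_ratio d d' x a * dist_ratio d d' y b"
proof -
  have off_d: "u \<notin> infpts d" and off_d': "u \<notin> infpts d'" if "u \<in> {x, y, a, b}" for u
    using off[OF that] by simp_all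
  have pos: "0 < enn2real (d u v)" "0 < enn2real (d' u v)"
    if "u \<in> {x, y, a, b}" "v \<in> {x, y, a, b}" "u \<noteq> v" for u v
    using quasi_metric_finite_off_infpts(2)[OF q three off_d[OF that(1)] off_d[OF that(2)] that(3)]
      quasi_metric_finite_off_infpts(2)[OF q' three off_d'[OF that(1)] off_d'[OF that(2)] that(3)]
    by simp_all
  have "x \<noteq> y" "x \<noteq> a" "x \<noteq> b" "y \<noteq> a" "y \<noteq> b" "a \<noteq> b"
    using \<open>distinct [x, y, a, b]\<close> by auto
  moreover have "crt_rep d (x, y, a, b) = (enn2real (d x y) * enn2real (d a b),
      enn2real (d x a) * enn2real (d y b), enn2real (d x b) * enn2real (d y a))"
    by (rule crt_rep_off_infpts[OF q three]) (simp_all add: off_d)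
  moreover have "crt_rep d' (x, y, a, b) = (enn2real (d' x y) * enn2real (d' a b),
      enn2real (d' x a) * enn2real (d' y b), enn2real (d' x b) * enn2real (d' y a))"
    by (rule crt_rep_off_infpts[OF q' three]) (simp_all add: off_d')
  ultimately have "enn2real (d x y) * enn2real (d a b) * (enn2real (d' x a) * enn2real (d' y b))
       = enn2real (d' x y) * enn2real (d' a b) * (enn2real (d x a) * enn2real (d y b))"
    using same by (intro Phibar_eq_imp_cross_mult[where c = "enn2real (d x b) * enn2real (d y a)"
      and c' = "enn2real (d' x b) * enn2real (d' y a)"] mult_pos_pos pos) simp_all
  moreover have "0 < enn2real (d x y)" "0 < enn2real (d a b)"
    "0 < enn2real (d x a)" "0 < enn2real (d y b)"
    using pos \<open>x \<noteq> y\<close> \<open>a \<noteq> b\<close> \<open>x \<noteq> a\<close> \<open>y \<noteq> b\<close> by simp_all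
  ultimately show ?thesis unfolding dist_ratio_def by (simp add: field_simps)
qed

lemma ennreal_le_mult_if_real_le:
  assumes "a = ennreal A" "b = ennreal B" "A \<le> C * B" "0 \<le> C" "0 \<le> B"
  shows "a \<le> ennreal C * b"
  using assms by (simp add: ennreal_mult[symmetric] ennreal_leI)

lemma comparable_on_ratio_pieces:
  fixes d d' :: "'a \<Rightarrow> 'a \<Rightarrow> ennreal"
  assumes q: "quasi_metric d" and q': "quasi_metric d'" and three: "\<exists>x y z :: 'a. distinct [x, y, z]"
    and same: "\<And>P. nondegenerate P \<Longrightarrow> Phibar (crt_rep d P) = Phibar (crt_rep d' P)"
    and E: "E = infpts d \<union> infpts d' \<union> {a, b}"
    and "a \<noteq> b" "a \<notin> infpts d \<union> infpts d'" "b \<notin> infpts d \<union> infpts d'"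
    and x: "x \<in> dyadic_piece E (\<lambda>x. dist_ratio d d' x a) i"
    and y: "y \<in> dyadic_piece E (\<lambda>x. dist_ratio d d' x b) j"
  defines "R \<equiv> dist_ratio d d' a b"
  shows "d' x y \<le> ennreal (2 powr (i + 1) * 2 powr (j + 1) / R) * d x y \<and>
    d x y \<le> ennreal (R / (2 powr i * 2 powr j)) * d' x y"
proof (cases "x = y")
  case True
  then show ?thesis using quasi_metric_eq_0_iff[OF q, of y y] quasi_metric_eq_0_iff[OF q', of y y]
    by simp
next
  case False
  define D D' where "D u v = enn2real (d u v)" and "D' u v = enn2real (d' u v)" for u v
  have off: "x \<notin> infpts d \<union> infpts d'" "x \<noteq> a" "x \<noteq> b" "y \<notin> infpts d \<union> infpts d'" "y \<noteq> a" "y \<noteq> b"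
    using x y unfolding dyadic_piece_def E by auto
  have "0 < R" unfolding R_def using dist_ratio_pos[OF q q' three] assms(6-8) by blast
  have "0 < D x y" "0 < D' x y"
    using quasi_metric_finite_off_infpts(2)[OF q three] quasi_metric_finite_off_infpts(2)[OF q' three]
      off False
    unfolding D_def D'_def by blast+
  have "dist_ratio d d' x y * R = dist_ratio d d' x a * dist_ratio d d' y b"
    unfolding R_def
  proof (rule dist_ratio_cross[OF q q' three same])
    show "nondegenerate (x, y, a, b)" "distinct [x, y, a, b]"
      using off False \<open>a \<noteq> b\<close> by (auto simp: nondegenerate_def qlist_def)
  qed (use off assms(7,8) in auto)
  then have "dist_ratio d d' x y = dist_ratio d d' x a * dist_ratio d d' y b / R"
    using \<open>0 < R\<close> by (simp add: field_simps)
  then have "dist_ratio d d' x y \<le> 2 powr (i + 1) * 2 powr (j + 1) / R"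
    "2 powr i * 2 powr j / R \<le> dist_ratio d d' x y"
    using dyadic_piece_bounds[OF x y] \<open>0 < R\<close> by (simp_all add: divide_right_mono)
  then have "D' x y \<le> 2 powr (i + 1) * 2 powr (j + 1) / R * D x y"
    "D x y \<le> R / (2 powr i * 2 powr j) * D' x y"
    using \<open>0 < D x y\<close> \<open>0 < R\<close> unfolding dist_ratio_def D_def D'_def by (simp_all add: field_simps)
  moreover have "d x y = ennreal (D x y)" "d' x y = ennreal (D' x y)"
    using off quasi_metric_finite_off_infpts(1)[OF q three]
      quasi_metric_finite_off_infpts(1)[OF q' three]
    unfolding D_def D'_def by auto
  ultimately show ?thesis
    using \<open>0 < D x y\<close> \<open>0 < D' x y\<close> \<open>0 < R\<close> by (auto intro!: ennreal_le_mult_if_real_le)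
qed

lemma dimH_eq_if_countable:
  fixes d d' :: "'a \<Rightarrow> 'a \<Rightarrow> ennreal"
  assumes q: "quasi_metric d" and q': "quasi_metric d'" and three: "\<exists>x y z :: 'a. distinct [x, y, z]"
    and "countable (UNIV :: 'a set)"
  shows "dimH d = dimH d'"
  by (rule dimH_eq_piecewise[where F = UNIV and S = "{}"])
    (use assms(4) quasi_metric_infpts_ne_UNIV[OF q three] quasi_metric_infpts_ne_UNIV[OF q' three]
      quasi_metric_eq_0_iff[OF q] quasi_metric_eq_0_iff[OF q'] in auto)

lemma dimH_eq_if_same_cross_ratios:
  fixes d d' :: "'a \<Rightarrow> 'a \<Rightarrow> ennreal"
  assumes q: "quasi_metric d" and q': "quasi_metric d'" and three: "\<exists>x y z :: 'a. distinct [x, y, z]"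
    and same: "\<And>P. nondegenerate P \<Longrightarrow> Phibar (crt_rep d P) = Phibar (crt_rep d' P)"
  shows "dimH d = dimH d'"
proof (cases "finite (UNIV :: 'a set)")
  case True
  then show ?thesis using dimH_eq_if_countable[OF q q' three] countable_finite by blast
next
  case False
  define G where "G = infpts d \<union> infpts d'"
  have "finite G" unfolding G_def
    using quasi_metric_infpts_finite[OF q three] quasi_metric_infpts_finite[OF q' three] by simp
  obtain a where "a \<notin> G" using ex_new_if_finite[OF False \<open>finite G\<close>] by blast
  obtain b where "b \<notin> insert a G" using ex_new_if_finite[OF False] \<open>finite G\<close> by blast
  define E where "E = G \<union> {a, b}"
  define A where "A ij = dyadic_piece E (\<lambda>x. dist_ratio d d' x a) (fst ij) \<inter>
    dyadic_piece E (\<lambda>x. dist_ratio d d' x b) (snd ij)" for ij :: "int \<times> int"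
  have cover: "E \<union> \<Union>(range A) = UNIV"
  proof -
    have "x \<in> \<Union>(range A)" if x: "x \<notin> E" for x
    proof -
      have "0 < dist_ratio d d' x a" "0 < dist_ratio d d' x b"
        using dist_ratio_pos[OF q q' three] x \<open>a \<notin> G\<close> \<open>b \<notin> insert a G\<close> unfolding E_def G_def by auto
      then obtain i j where "x \<in> dyadic_piece E (\<lambda>x. dist_ratio d d' x a) i"
        "x \<in> dyadic_piece E (\<lambda>x. dist_ratio d d' x b) j"
        by (meson dyadic_piece_exists[OF x])
      then have "x \<in> A (i, j)" unfolding A_def by simp
      then show ?thesis by blast
    qed
    then show ?thesis by blast
  qed
  have compare: "d' x y \<le> ennreal (2 powr (i + 1) * 2 powr (j + 1) / dist_ratio d d' a b) * d x y \<and>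
      d x y \<le> ennreal (dist_ratio d d' a b / (2 powr i * 2 powr j)) * d' x y"
    if "x \<in> A (i, j)" "y \<in> A (i, j)" for x y i j
    using that \<open>a \<notin> G\<close> \<open>b \<notin> insert a G\<close> unfolding A_def E_def G_def
    by (intro comparable_on_ratio_pieces[OF q q' three same]) auto
  have "0 < dist_ratio d d' a b" using dist_ratio_pos[OF q q' three] \<open>a \<notin> G\<close> \<open>b \<notin> insert a G\<close>
    unfolding G_def by auto
  obtain K where "K \<ge> 1" and triangle: "\<And>x y z. d x y \<le> ennreal K * max (d x z) (d z y)"
    using quasi_metric_triangle[OF q] by blast
  obtain K' where "K' \<ge> 1" and triangle': "\<And>x y z. d' x y \<le> ennreal K' * max (d' x z) (d' z y)"
    using quasi_metric_triangle[OF q'] by blast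
  show ?thesis
  proof (rule dimH_eq_piecewise[OF _ _ _ _ _ _ cover])
    fix B assume "B \<in> range A"
    then obtain i j where B: "B = A (i, j)" by (metis surj_pair rangeE)
    show "ball_lipschitz d d' B" unfolding B
      using compare \<open>0 < dist_ratio d d' a b\<close>
      by (intro ball_lipschitz_if_le[where C = "2 powr (i + 1) * 2 powr (j + 1) / dist_ratio d d' a b",
            OF quasi_metric_sym[OF q] triangle \<open>K \<ge> 1\<close>]) auto
    show "ball_lipschitz d' d B" unfolding B
      using compare \<open>0 < dist_ratio d d' a b\<close>
      by (intro ball_lipschitz_if_le[where C = "dist_ratio d d' a b / (2 powr i * 2 powr j)",
            OF quasi_metric_sym[OF q'] triangle' \<open>K' \<ge> 1\<close>]) auto
    show "B \<inter> (infpts d \<union> infpts d') = {}" unfolding B A_def E_def G_def dyadic_piece_def by blast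
  qed (use \<open>finite G\<close> E_def quasi_metric_infpts_ne_UNIV[OF q three]
      quasi_metric_infpts_ne_UNIV[OF q' three]
      quasi_metric_eq_0_iff[OF q] quasi_metric_eq_0_iff[OF q'] in \<open>auto intro: countable_finite\<close>)
qed

section \<open>Pulling back along bijections\<close>

lemma cball_d_pullback: "cball_d (\<lambda>x y. d (f x) (f y)) c r = f -` cball_d d (f c) r"
  unfolding cball_d_def by simp

lemma haus_null_pullback:
  assumes "bij f"
  shows "haus_null (\<lambda>x y. d (f x) (f y)) s A \<longleftrightarrow> haus_null d s (f ` A)"
proof
  assume null: "haus_null (\<lambda>x y. d (f x) (f y)) s A"
  show "haus_null d s (f ` A)" unfolding haus_null_def
  proof (intro allI impI)
    fix \<delta> \<epsilon> :: real assume "0 < \<delta>" "0 < \<epsilon>"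
    then obtain I c r where "\<forall>i\<in>I. 0 < r i \<and> r i \<le> \<delta>"
      and "A \<subseteq> (\<Union>i\<in>I. f -` cball_d d (f (c i)) (r i))"
      and "(\<Sum>i. if i \<in> (I::nat set) then ennreal (r i powr s) else 0) < ennreal \<epsilon>"
      using null[unfolded haus_null_def cball_d_pullback, rule_format, OF \<open>0 < \<delta>\<close> \<open>0 < \<epsilon>\<close>]
      by (elim exE conjE)
    then show "\<exists>I c r. (\<forall>i\<in>I. 0 < r i \<and> r i \<le> \<delta>) \<and> f ` A \<subseteq> (\<Union>i\<in>I. cball_d d (c i) (r i)) \<and>
        (\<Sum>i. if i \<in> (I::nat set) then ennreal (r i powr s) else 0) < ennreal \<epsilon>"
      by (intro exI[of _ I] exI[of _ "\<lambda>i. f (c i)"] exI[of _ r]) blast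
  qed
next
  assume null: "haus_null d s (f ` A)"
  show "haus_null (\<lambda>x y. d (f x) (f y)) s A" unfolding haus_null_def cball_d_pullback
  proof (intro allI impI)
    fix \<delta> \<epsilon> :: real assume "0 < \<delta>" "0 < \<epsilon>"
    then obtain I c r where "\<forall>i\<in>I. 0 < r i \<and> r i \<le> \<delta>"
      and cover: "f ` A \<subseteq> (\<Union>i\<in>I. cball_d d (c i) (r i))"
      and "(\<Sum>i. if i \<in> (I::nat set) then ennreal (r i powr s) else 0) < ennreal \<epsilon>"
      using null[unfolded haus_null_def, rule_format, OF \<open>0 < \<delta>\<close> \<open>0 < \<epsilon>\<close>] by (elim exE conjE)
    moreover have "A \<subseteq> (\<Union>i\<in>I. f -` cball_d d (f (inv f (c i))) (r i))"
      using cover bij_is_surj[OF assms] by (force simp: surj_f_inv_f)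
    ultimately show "\<exists>I c r. (\<forall>i\<in>I. 0 < r i \<and> r i \<le> \<delta>) \<and> A \<subseteq> (\<Union>i\<in>I. f -` cball_d d (f (c i)) (r i)) \<and>
        (\<Sum>i. if i \<in> (I::nat set) then ennreal (r i powr s) else 0) < ennreal \<epsilon>"
      by (intro exI[of _ I] exI[of _ "\<lambda>i. inv f (c i)"] exI[of _ r]) blast
  qed
qed

lemma infpts_pullback:
  assumes "bij f" shows "infpts (\<lambda>x y. d (f x) (f y)) = f -` infpts d"
proof -
  have "(\<forall>x. x \<noteq> p \<longrightarrow> d (f x) (f p) = \<infinity>) \<longleftrightarrow> (\<forall>u. u \<noteq> f p \<longrightarrow> d u (f p) = \<infinity>)" for p
    using assms by (metis bij_pointE)
  then show ?thesis unfolding infpts_def by auto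
qed

lemma dimH_pullback:
  assumes "bij f" shows "dimH (\<lambda>x y. d (f x) (f y)) = dimH d"
proof (rule dimH_eq_if_same_null_sets)
  fix s
  have "UNIV - f -` infpts d = f -` (UNIV - infpts d)" by auto
  then have "f ` (UNIV - f -` infpts d) = UNIV - infpts d"
    using bij_is_surj[OF assms] by (simp add: surj_image_vimage_eq)
  then show "haus_null (\<lambda>x y. d (f x) (f y)) s (UNIV - infpts (\<lambda>x y. d (f x) (f y)))
      \<longleftrightarrow> haus_null d s (UNIV - infpts d)"
    by (simp add: infpts_pullback[OF assms] haus_null_pullback[OF assms])
qed

lemma Ex1_bij_iff:
  assumes "bij f" shows "(\<exists>!x. P (f x)) \<longleftrightarrow> (\<exists>!y. P y)"
proof
  assume "\<exists>!x. P (f x)"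
  then obtain x where "P (f x)" "\<And>x'. P (f x') \<Longrightarrow> x' = x" by blast
  then show "\<exists>!y. P y" using bij_inv_eq_iff[OF assms] by (metis bij_pointE[OF assms])
next
  assume "\<exists>!y. P y"
  then obtain y where "P y" "\<And>y'. P y' \<Longrightarrow> y' = y" by blast
  then show "\<exists>!x. P (f x)" using bij_inv_eq_iff[OF assms] by metis
qed

definition point_at_infinity :: "('a \<Rightarrow> 'a \<Rightarrow> ennreal) \<Rightarrow> 'a \<Rightarrow> bool" where
  "point_at_infinity d p \<longleftrightarrow> (\<forall>x. x \<noteq> p \<longrightarrow> d x p = \<infinity>) \<and> (\<forall>x y. x \<noteq> p \<longrightarrow> y \<noteq> p \<longrightarrow> d x y \<noteq> \<infinity>)"

lemma point_at_infinity_pullback: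
  assumes "bij f" shows "point_at_infinity (\<lambda>x y. d (f x) (f y)) p \<longleftrightarrow> point_at_infinity d (f p)"
proof -
  have "(\<forall>x. x \<noteq> p \<longrightarrow> d (f x) (f p) = \<infinity>) \<longleftrightarrow> (\<forall>u. u \<noteq> f p \<longrightarrow> d u (f p) = \<infinity>)"
    using assms by (metis bij_pointE)
  moreover have "(\<forall>x y. x \<noteq> p \<longrightarrow> y \<noteq> p \<longrightarrow> d (f x) (f y) \<noteq> \<infinity>) \<longleftrightarrow>
      (\<forall>u v. u \<noteq> f p \<longrightarrow> v \<noteq> f p \<longrightarrow> d u v \<noteq> \<infinity>)"
    using assms by (metis bij_pointE)
  ultimately show ?thesis unfolding point_at_infinity_def by simp
qed

lemma quasi_metric_pullback:
  assumes f: "bij f" and q: "quasi_metric d"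
  shows "quasi_metric (\<lambda>x y. d (f x) (f y))"
proof -
  let ?e = "\<lambda>x y. d (f x) (f y)"
  have sym: "?e x y = ?e y x" and zero: "?e x y = 0 \<longleftrightarrow> x = y" for x y
    using quasi_metric_sym[OF q] quasi_metric_eq_0_iff[OF q] bij_is_inj[OF f] by (auto simp: inj_eq)
  have "semi_metric d \<or> ext_semi_metric d" using q unfolding quasi_metric_def by (elim conjE)
  then have "semi_metric ?e \<or> ext_semi_metric ?e"
  proof
    assume "semi_metric d"
    then show ?thesis unfolding semi_metric_def using sym zero by simp
  next
    assume "ext_semi_metric d"
    then have "\<exists>!q. point_at_infinity d q"
      unfolding ext_semi_metric_def point_at_infinity_def by (elim conjE)
    then have "\<exists>!p. point_at_infinity ?e p"
      unfolding point_at_infinity_pullback[OF f] Ex1_bij_iff[OF f] .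
    then show ?thesis unfolding ext_semi_metric_def point_at_infinity_def using sym zero by simp
  qed
  moreover obtain K where "K \<ge> 1" "\<And>x y z. d x y \<le> ennreal K * max (d x z) (d z y)"
    using quasi_metric_triangle[OF q] by blast
  ultimately show ?thesis unfolding quasi_metric_def by blast
qed

lemma admissible_if_nondegenerate: "nondegenerate P \<Longrightarrow> admissible P"
  unfolding admissible_def nondegenerate_def by (cases P) (auto simp: qlist_def)

lemma admissible_map_quad:
  assumes "inj f" "admissible P" shows "admissible (map_quad f P)"
proof -
  have "qlist (map_quad f P) = map f (qlist P)" by (cases P) (simp add: qlist_def map_quad_def)
  moreover have "count_list (map f (qlist P)) y \<le> 2" for y
  proof (cases "y \<in> range f")
    case True
    then show ?thesis using assms by (auto simp: count_list_map_conv admissible_def)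
  next
    case False
    then show ?thesis by (subst count_notin) auto
  qed
  ultimately show ?thesis unfolding admissible_def by simp
qed

lemma crt_rep_pullback: "crt_rep (\<lambda>x y. d (f x) (f y)) P = crt_rep d (map_quad f P)"
  by (cases P) (simp add: crt_rep_def Dfin_def map_quad_def)

lemma induces_pullback:
  assumes "moebius_equiv f M M'" "induces d M'"
  shows "induces (\<lambda>x y. d (f x) (f y)) M"
  using assms admissible_map_quad[OF bij_is_inj]
  unfolding moebius_equiv_def induces_def crt_rep_pullback by metis

lemma dimH_eq_if_induce_same:
  fixes d d' :: "'a \<Rightarrow> 'a \<Rightarrow> ennreal"
  assumes "quasi_metric d" "quasi_metric d'" "\<exists>x y z :: 'a. distinct [x, y, z]"
    and "induces d M" "induces d' M"
  shows "dimH d = dimH d'"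
proof (rule dimH_eq_if_same_cross_ratios[OF assms(1-3)])
  fix P :: "'a quad" assume "nondegenerate P"
  then have "admissible P" by (rule admissible_if_nondegenerate)
  then show "Phibar (crt_rep d P) = Phibar (crt_rep d' P)"
    using assms(4,5) unfolding induces_def by metis
qed

theorem theorem1p1:
  fixes M :: "'a quad \<Rightarrow> triple" and d :: "'a \<Rightarrow> 'a \<Rightarrow> ennreal"
  assumes "\<exists>x y z :: 'a. distinct [x, y, z]"
    and "moebius_space M"
    and "quasi_metric d"
    and "induces d M"
  shows "(\<forall>l::real. l > 0 \<longrightarrow> dimH (\<lambda>x y. ennreal l * d x y) = dimH d)
       \<and> (\<forall>p0. p0 \<notin> infpts d \<longrightarrow> dimH (involution d p0) = dimH d)
       \<and> (\<forall>d'. quasi_metric d' \<and> induces d' M \<longrightarrow> dimH d' = dimH d)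
       \<and> (\<forall>(M' :: 'b quad \<Rightarrow> triple) (f :: 'a \<Rightarrow> 'b) (d' :: 'b \<Rightarrow> 'b \<Rightarrow> ennreal).
            (\<exists>x y z :: 'b. distinct [x, y, z]) \<and> moebius_space M' \<and> moebius_equiv f M M'
            \<and> quasi_metric d' \<and> induces d' M' \<longrightarrow> dimH d' = dimH d)"
proof -
  note three = assms(1)
  have invariance: "dimH d' = dimH d" if "quasi_metric d'" "induces d' M" for d'
    using dimH_eq_if_induce_same[OF assms(3) that(1) three assms(4) that(2)] by simp
  have "dimH d' = dimH d"
    if "moebius_equiv f M M'" "quasi_metric d'" "induces d' M'"
    for M' :: "'b quad \<Rightarrow> triple" and f :: "'a \<Rightarrow> 'b" and d'
  proof -
    have "bij f" using that(1) unfolding moebius_equiv_def by blast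
    have "dimH d' = dimH (\<lambda>x y. d' (f x) (f y))" by (rule dimH_pullback[OF \<open>bij f\<close>, symmetric])
    also have "\<dots> = dimH d"
      by (rule invariance[OF quasi_metric_pullback[OF \<open>bij f\<close> that(2)] induces_pullback[OF that(1,3)]])
    finally show ?thesis .
  qed
  then show ?thesis using dimH_scale[OF assms(3) three] dimH_involution[OF assms(3) three] invariance
    by blast
qed

end
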